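(* Let $\varphi$ be as described in the context, with $\varphi(z)=1+B_1z+B_2z^2+\cdots$. If $f(z)=z+\sum_{n\ge2}a_nz^n$ belongs to $\mathcal{K}_{\sigma}(\varphi)$, then \[ |a_2|\le \frac{B_1\sqrt{B_1}}{\sqrt{4B_1+|2B_1^2-4B_2|}} \] and \[ |a_3|\le\begin{cases}\left(1-\dfrac{2}{3B_1}\right)\dfrac{B_1^3}{4B_1+|2B_1^2-4B_2|}+\dfrac{B_1}{6}, & \text{if } B_1\ge \dfrac{2}{3},\\[3mm] \dfrac{B_1}{6}, & \text{if } B_1< \dfrac{2}{3}.\end{cases} \]
   Context: $\mathbb{U}=\{z\in\mathbb{C}:|z|<1\}$. For analytic $f,g$ on $\mathbb{U}$, $f\prec g$ means there is an analytic $w$ on $\mathbb{U}$ with $w(0)=0$, $|w(z)|<1$, and $f(z)=g(w(z))$. The function $\varphi$ is analytic and univalent in $\mathbb{U}$ with positive real part, $\varphi(0)=1$, $\varphi'(0)>0$, $\varphi$ maps $\mathbb{U}$ onto a region starlike with respect to $1$ and symmetric with respect to the real axis; $\varphi(z)=1+B_1z+B_2z^2+\cdots$ with real coefficients and $B_1>0$. $\sigma$ denotes the class of analytic functions $f(z)=z+\sum_{n\ge2}a_nz^n$ on $\mathbb{U}$ that are univalent in $\mathbb{U}$ and whose inverse $g=f^{-1}$ is also univalent in $\mathbb{U}$. $\mathcal{K}_{\sigma}(\varphi)$ is the set of $f\in\sigma$ with $1+\frac{zf''(z)}{f'(z)}\prec\varphi(z)$ ($z\in\mathbb{U}$) and $1+\frac{wg''(w)}{g'(w)}\prec\varphi(w)$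 ($w\in\mathbb{U}$), where $g=f^{-1}$. *)

theory Defs
  imports "HOL-Complex_Analysis.Complex_Analysis"
begin

definition unit_disc :: "complex set" where
  "unit_disc = ball 0 1"

definition taylor_coeff :: "(complex \<Rightarrow> complex) \<Rightarrow> nat \<Rightarrow> complex" where
  "taylor_coeff f n = (deriv ^^ n) f 0 / of_nat (fact n)"

definition subordinate :: "(complex \<Rightarrow> complex) \<Rightarrow> (complex \<Rightarrow> complex) \<Rightarrow> bool" where
  "subordinate p q \<longleftrightarrow> p holomorphic_on unit_disc \<and> q holomorphic_on unit_disc \<and>
     (\<exists>w. w holomorphic_on unit_disc \<and> w 0 = 0 \<and> (\<forall>z\<in>unit_disc. norm (w z) < 1) \<and>
          (\<forall>z\<in>unit_disc. p z = q (w z)))"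

definition admissible_phi :: "(complex \<Rightarrow> complex) \<Rightarrow> bool" where
  "admissible_phi \<phi> \<longleftrightarrow>
     \<phi> holomorphic_on unit_disc \<and> inj_on \<phi> unit_disc \<and>
     (\<forall>z\<in>unit_disc. Re (\<phi> z) > 0) \<and> \<phi> 0 = 1 \<and>
     deriv \<phi> 0 \<in> \<real> \<and> Re (deriv \<phi> 0) > 0 \<and>
     (\<forall>v\<in>\<phi> ` unit_disc. closed_segment 1 v \<subseteq> \<phi> ` unit_disc) \<and>
     (\<forall>v\<in>\<phi> ` unit_disc. cnj v \<in> \<phi> ` unit_disc) \<and>
     (\<forall>n. taylor_coeff \<phi> n \<in> \<real>)"

text \<open>g is the inverse of f continued univalently to the whole disc: g is analytic and
  univalent on the disc and g (f z) = z whenever z and f z lie in the disc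
  (hence g = f^{-1} near 0, so g is the analytic continuation of f^{-1}).\<close>
definition bi_univalent :: "(complex \<Rightarrow> complex) \<Rightarrow> (complex \<Rightarrow> complex) \<Rightarrow> bool" where
  "bi_univalent f g \<longleftrightarrow>
     f holomorphic_on unit_disc \<and> f 0 = 0 \<and> deriv f 0 = 1 \<and> inj_on f unit_disc \<and>
     g holomorphic_on unit_disc \<and> inj_on g unit_disc \<and>
     (\<forall>z\<in>unit_disc. f z \<in> unit_disc \<longrightarrow> g (f z) = z)"

definition K_sigma :: "(complex \<Rightarrow> complex) \<Rightarrow> (complex \<Rightarrow> complex) set" where
  "K_sigma \<phi> = {f. \<exists>g. bi_univalent f g \<and>
      subordinate (\<lambda>z. 1 + z * deriv (deriv f) z / deriv f z) \<phi> \<and>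
      subordinate (\<lambda>w. 1 + w * deriv (deriv g) w / deriv g w) \<phi>}"

end

theory Submission
  imports Defs
begin

(* Writing both subordinations through Schwarz functions u and v and comparing Taylor
   coefficients at 0 gives, with A2 = f''(0) and A3 = f'''(0),
     B1 u'(0) = A2,   2 B2 u'(0)^2 + B1 u''(0) = 2 A3 - 2 A2^2,
   and the same relations for g and v, where g''(0) = -A2 and g'''(0) = 3 A2^2 - A3.
   Hence v'(0) = -u'(0); adding the second-order relations gives
   A2^2 (2 B1^2 - 4 B2) = B1^3 (u''(0) + v''(0)), subtracting them gives
   4 A3 = 6 A2^2 + B1 (u''(0) - v''(0)).  Both right-hand sides are bounded by the
   Schwarz--Pick estimate |u''(0)| \<le> 2 (1 - |u'(0)|^2), where |u'(0)| = |A2| / B1. *)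

definition schwarz_function :: "(complex \<Rightarrow> complex) \<Rightarrow> bool" where
  "schwarz_function u \<longleftrightarrow>
     u holomorphic_on ball 0 1 \<and> u 0 = 0 \<and> (\<forall>z\<in>ball 0 1. norm (u z) < 1)"

lemma subordinate_schwarz_function:
  assumes "subordinate p q"
  obtains u where "schwarz_function u" and "\<And>z. z \<in> ball 0 1 \<Longrightarrow> p z = q (u z)"
  using assms by (auto simp: subordinate_def schwarz_function_def unit_disc_def)

lemma taylor_coeff_1_2_3:
  "taylor_coeff f 1 = deriv f 0"
  "taylor_coeff f 2 = deriv (deriv f) 0 / 2"
  "taylor_coeff f 3 = deriv (deriv (deriv f)) 0 / 6"
  by (simp_all add: taylor_coeff_def eval_nat_numeral fact_numeral)

lemma DERIV_unique_on_open:
  assumes "open S" "z \<in> S" "\<And>x. x \<in> S \<Longrightarrow> F x = G x"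
    and "(F has_field_derivative D) (at z)" "(G has_field_derivative E) (at z)"
  shows "D = E"
proof -
  have "(G has_field_derivative D) (at z)"
    by (rule has_field_derivative_transform_within_open[OF assms(4,1,2)]) (use assms(3) in auto)
  then show ?thesis using assms(5) DERIV_unique by blast
qed

lemma Schwarz_Pick_deriv_0:
  assumes holh: "h holomorphic_on ball 0 1" and hle: "\<And>z. norm z < 1 \<Longrightarrow> norm (h z) \<le> 1"
  shows "norm (deriv h 0) \<le> 1 - norm (h 0) ^ 2"
proof (cases "\<exists>z. norm z < 1 \<and> norm (h z) = 1")
  case True
  then obtain z where z: "norm z < 1" "norm (h z) = 1" by blast
  have "ball z (1 - norm z) \<subseteq> ball 0 1"
    by (simp add: ball_subset_ball_iff)
  then have "h constant_on ball 0 1"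
    using Schwarz2[OF holh, of "1 - norm z" z] z hle by (force simp: dist_norm)
  then obtain c where c: "\<And>w. w \<in> ball 0 1 \<Longrightarrow> h w = c" by (auto simp: constant_on_def)
  have "deriv h 0 = 0"
    using DERIV_unique_on_open[of "ball 0 1" 0 h "\<lambda>_. c"] holomorphic_derivI[OF holh] c by auto
  with c z show ?thesis by auto
next
  case False
  then have hlt: "\<And>z. norm z < 1 \<Longrightarrow> norm (h z) < 1" using hle by force
  define c where "c = h 0"
  have c1: "norm c < 1" using hlt by (simp add: c_def)
  have "cnj c * c = of_real (norm c ^ 2)"
    by (simp only: complex_norm_square mult.commute)
  then have den: "1 - cnj c * c = of_real (1 - norm c ^ 2)" by simp
  have c2: "norm c ^ 2 < 1" using c1 by (simp add: abs_square_less_1)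
  text \<open>Compose with the disc automorphism sending \<open>c\<close> to \<open>0\<close> and apply the Schwarz lemma.\<close>
  define M where "M = (\<lambda>z. Moebius_function 0 c (h z))"
  have holM: "M holomorphic_on ball 0 1"
    unfolding M_def
    by (rule holomorphic_on_compose_gen[OF holh Moebius_function_holomorphic[OF c1], unfolded o_def])
       (use hlt in auto)
  have nz: "1 - cnj c * c \<noteq> 0"
    using den c2 by (simp del: of_real_diff)
  have "(h has_field_derivative deriv h 0) (at 0)"
    using holh by (auto intro: holomorphic_derivI)
  then have "((\<lambda>z. (h z - c) / (1 - cnj c * h z)) has_field_derivative deriv h 0 / (1 - cnj c * c)) (at 0)"
    using nz by (auto intro!: derivative_eq_intros simp: c_def power2_eq_square)
  then have "deriv M 0 = deriv h 0 / of_real (1 - norm c ^ 2)"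
    unfolding den by (simp add: DERIV_imp_deriv M_def Moebius_function_simple del: of_real_diff)
  moreover have "norm (deriv M 0) \<le> 1"
    using Schwarz_Lemma(2)[OF holM, of 0] Moebius_function_norm_lt_1[OF c1] hlt
    by (simp add: M_def c_def Moebius_function_eq_zero)
  ultimately have "norm (deriv h 0) / (1 - norm c ^ 2) \<le> 1"
    using c2 by (simp add: norm_divide del: of_real_diff of_real_power)
  then show ?thesis
    using c2 by (simp add: divide_le_eq c_def)
qed

lemma schwarz_function_deriv2_bound:
  assumes "schwarz_function u"
  shows "norm (deriv (deriv u) 0) / 2 \<le> 1 - norm (deriv u 0) ^ 2"
proof -
  have holu: "u holomorphic_on ball 0 1" and u0: "u 0 = 0"
    and ub: "\<And>z. norm z < 1 \<Longrightarrow> norm (u z) < 1"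
    using assms by (auto simp: schwarz_function_def)
  obtain h where holh: "h holomorphic_on ball 0 1" and uz: "\<And>z. norm z < 1 \<Longrightarrow> u z = z * h z"
    and d0: "deriv u 0 = h 0"
    using Schwarz3[OF holu u0] by blast
  have dh: "\<And>z. z \<in> ball 0 1 \<Longrightarrow> (h has_field_derivative deriv h z) (at z)"
    and ddh: "\<And>z. z \<in> ball 0 1 \<Longrightarrow> (deriv h has_field_derivative deriv (deriv h) z) (at z)"
    using holh holomorphic_deriv[OF holh] by (auto intro: holomorphic_derivI)
  have du: "deriv u z = h z + z * deriv h z" if "z \<in> ball 0 1" for z
  proof (rule DERIV_imp_deriv)
    show "(u has_field_derivative h z + z * deriv h z) (at z)"
      by (rule has_field_derivative_transform_within_open[of "\<lambda>z. z * h z" _ _ "ball 0 1"])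
         (use dh[OF that] that uz in \<open>auto intro!: derivative_eq_intros\<close>)
  qed
  have "((\<lambda>z. h z + z * deriv h z) has_field_derivative 2 * deriv h 0) (at 0)"
    using dh[of 0] ddh[of 0] by (auto intro!: derivative_eq_intros)
  then have "(deriv u has_field_derivative 2 * deriv h 0) (at 0)"
    by (rule has_field_derivative_transform_within_open[of _ _ _ "ball 0 1"]) (auto simp: du)
  then have "deriv (deriv u) 0 = 2 * deriv h 0" by (rule DERIV_imp_deriv)
  moreover have "norm (h z) \<le> 1" if "norm z < 1" for z
  proof (cases "z = 0")
    case True
    then show ?thesis using Schwarz_Lemma(2)[OF holu u0 ub, of 0] d0 by simp
  next
    case False
    then show ?thesis
      using Schwarz_Lemma(1)[OF holu u0 ub that] uz[OF that] by (simp add: norm_mult)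
  qed
  ultimately show ?thesis
    using Schwarz_Pick_deriv_0[OF holh] d0 by (simp add: norm_mult)
qed

lemma subordination_identity_coeffs:
  fixes \<phi> u H :: "complex \<Rightarrow> complex"
  assumes S: "open S" "0 \<in> S" and T: "open T"
    and holp: "\<phi> holomorphic_on T" and holu: "u holomorphic_on S" and uT: "u ` S \<subseteq> T"
    and holH: "H holomorphic_on S"
    and u0: "u 0 = 0" and p0: "\<phi> 0 = 1" and H0: "H 0 = 1"
    and eq: "\<And>z. z \<in> S \<Longrightarrow> \<phi> (u z) * H z = H z + z * deriv H z"
  shows "deriv \<phi> 0 * deriv u 0 = deriv H 0"
    and "deriv (deriv \<phi>) 0 * (deriv u 0)\<^sup>2 + deriv \<phi> 0 * deriv (deriv u) 0
           = 2 * deriv (deriv H) 0 - 2 * (deriv H 0)\<^sup>2"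
proof -
  have D: "(F has_field_derivative deriv F z) (at z)" if "F holomorphic_on S" "z \<in> S" for F z
    using holomorphic_derivI[OF that(1) S(1) that(2)] .
  have holu': "deriv u holomorphic_on S" and holH': "deriv H holomorphic_on S"
    and holH'': "deriv (deriv H) holomorphic_on S"
    using holomorphic_deriv S(1) holu holH by blast+
  have Dcomp: "((\<lambda>z. F (u z)) has_field_derivative deriv F (u z) * deriv u z) (at z)"
    if "F holomorphic_on T" "z \<in> S" for F z
    using DERIV_chain2[OF holomorphic_derivI[OF that(1) T] D[OF holu that(2)]] uT that(2) by auto
  have eq1: "deriv \<phi> (u z) * deriv u z * H z + \<phi> (u z) * deriv H z
      = 2 * deriv H z + z * deriv (deriv H) z" if z: "z \<in> S" for z
    by (rule DERIV_unique_on_open[OF S(1) z eq])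
       (use Dcomp[OF holp z] D[OF holH z] D[OF holH' z] in \<open>auto intro!: derivative_eq_intros\<close>)
  have eq2: "deriv (deriv \<phi>) 0 * deriv u 0 * deriv u 0 + deriv \<phi> 0 * deriv (deriv u) 0
      + 2 * deriv \<phi> 0 * deriv u 0 * deriv H 0 + deriv (deriv H) 0 = 3 * deriv (deriv H) 0"
    by (rule DERIV_unique_on_open[OF S eq1])
       (use Dcomp[OF holp S(2)] Dcomp[OF holomorphic_deriv[OF holp T] S(2)] D[OF holu' S(2)]
          D[OF holH S(2)] D[OF holH' S(2)] D[OF holH'' S(2)] u0 p0 H0
        in \<open>auto intro!: derivative_eq_intros simp: algebra_simps\<close>)
  show first: "deriv \<phi> 0 * deriv u 0 = deriv H 0"
    using eq1[OF S(2)] u0 p0 H0 by simp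
  show "deriv (deriv \<phi>) 0 * (deriv u 0)\<^sup>2 + deriv \<phi> 0 * deriv (deriv u) 0
           = 2 * deriv (deriv H) 0 - 2 * (deriv H 0)\<^sup>2"
    using eq2 unfolding first[symmetric] by (simp add: power2_eq_square algebra_simps)
qed

lemma convex_subordination_coeffs:
  fixes h \<phi> u :: "complex \<Rightarrow> complex"
  assumes holh: "h holomorphic_on ball 0 1" and h1: "deriv h 0 = 1"
    and holp: "\<phi> holomorphic_on ball 0 1" and p0: "\<phi> 0 = 1" and u: "schwarz_function u"
    and sub: "\<And>z. z \<in> ball 0 1 \<Longrightarrow> 1 + z * deriv (deriv h) z / deriv h z = \<phi> (u z)"
  shows "deriv \<phi> 0 * deriv u 0 = deriv (deriv h) 0"
    and "deriv (deriv \<phi>) 0 * (deriv u 0)\<^sup>2 + deriv \<phi> 0 * deriv (deriv u) 0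
           = 2 * deriv (deriv (deriv h)) 0 - 2 * (deriv (deriv h) 0)\<^sup>2"
proof -
  define S where "S = ball 0 1 \<inter> deriv h -` (- {0})"
  have holh': "deriv h holomorphic_on ball 0 1"
    using holomorphic_deriv[OF holh] by simp
  have S: "open S" "0 \<in> S" "S \<subseteq> ball 0 1"
    unfolding S_def using h1
    by (auto intro!: continuous_open_preimage holomorphic_on_imp_continuous_on holh')
  have holu: "u holomorphic_on ball 0 1" "u ` ball 0 1 \<subseteq> ball 0 1" "u 0 = 0"
    using u by (auto simp: schwarz_function_def)
  have "\<phi> (u z) * deriv h z = deriv h z + z * deriv (deriv h) z" if "z \<in> S" for z
    using sub[of z] that by (auto simp: S_def field_simps)
  from subordination_identity_coeffs[OF S(1,2) open_ball holp
      holomorphic_on_subset[OF holu(1) S(3)] _ holomorphic_on_subset[OF holh' S(3)] holu(3) p0 h1 this]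
  show "deriv \<phi> 0 * deriv u 0 = deriv (deriv h) 0"
    and "deriv (deriv \<phi>) 0 * (deriv u 0)\<^sup>2 + deriv \<phi> 0 * deriv (deriv u) 0
           = 2 * deriv (deriv (deriv h)) 0 - 2 * (deriv (deriv h) 0)\<^sup>2"
    using holu(2) S(3) by auto
qed

lemma inverse_deriv_coeffs:
  fixes f g :: "complex \<Rightarrow> complex"
  assumes S: "open S" "0 \<in> S" and T: "open T" "0 \<in> T"
    and holf: "f holomorphic_on S" and holg: "g holomorphic_on T"
    and f0: "f 0 = 0" and f1: "deriv f 0 = 1"
    and inv: "\<And>z. z \<in> S \<Longrightarrow> f z \<in> T \<Longrightarrow> g (f z) = z"
  shows "deriv g 0 = 1" and "deriv (deriv g) 0 = - deriv (deriv f) 0"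
    and "deriv (deriv (deriv g)) 0 = 3 * (deriv (deriv f) 0)\<^sup>2 - deriv (deriv (deriv f)) 0"
proof -
  define R where "R = S \<inter> f -` T"
  have R: "open R" "0 \<in> R"
    unfolding R_def using S T f0
    by (auto intro!: continuous_open_preimage holomorphic_on_imp_continuous_on holf)
  have RS: "z \<in> S" and fRT: "f z \<in> T" if "z \<in> R" for z
    using that by (auto simp: R_def)
  have D: "(F has_field_derivative deriv F z) (at z)" if "F holomorphic_on S" "z \<in> R" for F z
    using holomorphic_derivI[OF that(1) S(1) RS[OF that(2)]] .
  have holf': "deriv f holomorphic_on S" and holf'': "deriv (deriv f) holomorphic_on S"
    and holg': "deriv g holomorphic_on T" and holg'': "deriv (deriv g) holomorphic_on T"
    using holomorphic_deriv S(1) T(1) holf holg by blast+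
  have Dcomp: "((\<lambda>z. G (f z)) has_field_derivative deriv G (f z) * deriv f z) (at z)"
    if "G holomorphic_on T" "z \<in> R" for G z
    using DERIV_chain2[OF holomorphic_derivI[OF that(1) T(1) fRT[OF that(2)]] D[OF holf that(2)]] .
  have eq1: "deriv g (f z) * deriv f z = 1" if z: "z \<in> R" for z
    by (rule DERIV_unique_on_open[OF R(1) z, of "\<lambda>z. g (f z)" "\<lambda>z. z"])
       (use inv RS fRT Dcomp[OF holg z] in \<open>auto intro!: derivative_eq_intros\<close>)
  have eq2: "deriv (deriv g) (f z) * deriv f z * deriv f z + deriv g (f z) * deriv (deriv f) z = 0"
    if z: "z \<in> R" for z
    by (rule DERIV_unique_on_open[OF R(1) z eq1])
       (use Dcomp[OF holg' z] D[OF holf' z] in \<open>auto intro!: derivative_eq_intros simp: algebra_simps\<close>)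
  have eq3: "deriv (deriv (deriv g)) 0 + 3 * deriv (deriv g) 0 * deriv (deriv f) 0
      + deriv g 0 * deriv (deriv (deriv f)) 0 = 0"
    by (rule DERIV_unique_on_open[OF R eq2])
       (use Dcomp[OF holg' R(2)] Dcomp[OF holg'' R(2)] D[OF holf' R(2)] D[OF holf'' R(2)] f0 f1
        in \<open>auto intro!: derivative_eq_intros simp: algebra_simps\<close>)
  show g1: "deriv g 0 = 1"
    using eq1[OF R(2)] f0 f1 by simp
  show g2: "deriv (deriv g) 0 = - deriv (deriv f) 0"
    using eq2[OF R(2)] f0 f1 g1 by (simp add: add_eq_0_iff)
  show "deriv (deriv (deriv g)) 0 = 3 * (deriv (deriv f) 0)\<^sup>2 - deriv (deriv (deriv f)) 0"
    using eq3 g1 g2 by (simp add: power2_eq_square algebra_simps)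
qed

lemma bi_subordination_coeff_estimates:
  fixes A2 A3 G2 G3 c1 c2 d1 d2 :: complex and B1 B2 :: real
  assumes B1: "B1 > 0"
    and G: "G2 = - A2" "G3 = 3 * A2\<^sup>2 - A3"
    and f1: "of_real B1 * c1 = A2"
    and f2: "of_real (2 * B2) * c1\<^sup>2 + of_real B1 * c2 = 2 * A3 - 2 * A2\<^sup>2"
    and g1: "of_real B1 * d1 = G2"
    and g2: "of_real (2 * B2) * d1\<^sup>2 + of_real B1 * d2 = 2 * G3 - 2 * G2\<^sup>2"
    and c: "norm c2 / 2 \<le> 1 - norm c1 ^ 2" and d: "norm d2 / 2 \<le> 1 - norm d1 ^ 2"
  shows "norm A2 ^ 2 * (4 * B1 + \<bar>2 * B1\<^sup>2 - 4 * B2\<bar>) \<le> 4 * B1 ^ 3"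
    and "4 * norm A3 \<le> 6 * norm A2 ^ 2 + 4 * B1 - 4 * norm A2 ^ 2 / B1"
proof -
  define x where "x = norm A2 ^ 2"
  have "norm c1 = norm A2 / B1" "norm d1 = norm A2 / B1"
    using arg_cong[OF f1, of norm] arg_cong[OF g1, of norm] G B1 by (simp_all add: norm_mult field_simps)
  then have "norm c1 ^ 2 = x / B1\<^sup>2" "norm d1 ^ 2 = x / B1\<^sup>2"
    by (simp_all add: x_def power_divide)
  then have cd: "norm (c2 + d2) \<le> 4 - 4 * x / B1\<^sup>2" "norm (c2 - d2) \<le> 4 - 4 * x / B1\<^sup>2"
    using norm_triangle_ineq[of c2 d2] norm_triangle_ineq4[of c2 d2] c d by auto
  have d1: "d1 = - c1"
    using f1 g1 G B1 by (metis minus_mult_right mult_cancel_left of_real_eq_0_iff less_irrefl)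
  have f2': "2 * of_real B2 * c1\<^sup>2 + of_real B1 * c2 = 2 * A3 - 2 * A2\<^sup>2"
    and g2': "2 * of_real B2 * c1\<^sup>2 + of_real B1 * d2 = 4 * A2\<^sup>2 - 2 * A3"
    using f2 g2 unfolding G d1 by (simp_all add: power2_eq_square algebra_simps)
  have "of_real B1 * (c2 + d2) = 2 * A2\<^sup>2 - 4 * of_real B2 * c1\<^sup>2"
    using f2' g2' by algebra
  then have "of_real B1 ^ 2 * (of_real B1 * (c2 + d2)) = of_real B1 ^ 2 * (2 * A2\<^sup>2 - 4 * of_real B2 * c1\<^sup>2)"
    by simp
  then have "of_real B1 ^ 3 * (c2 + d2) = 2 * A2\<^sup>2 * of_real B1 ^ 2 - 4 * of_real B2 * (of_real B1 * c1)\<^sup>2"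
    by (simp add: power2_eq_square power3_eq_cube algebra_simps)
  then have sum: "A2\<^sup>2 * of_real (2 * B1\<^sup>2 - 4 * B2) = of_real B1 ^ 3 * (c2 + d2)"
    unfolding f1 by (simp add: algebra_simps)
  have diff: "4 * A3 = 6 * A2\<^sup>2 + of_real B1 * (c2 - d2)"
    using f2' g2' by algebra
  have "x * \<bar>2 * B1\<^sup>2 - 4 * B2\<bar> = norm (A2\<^sup>2 * of_real (2 * B1\<^sup>2 - 4 * B2))"
    by (simp only: x_def norm_mult norm_power norm_of_real)
  also have "\<dots> = B1 ^ 3 * norm (c2 + d2)"
    using B1 by (simp only: sum norm_mult norm_power norm_of_real abs_of_pos)
  also have "\<dots> \<le> B1 ^ 3 * (4 - 4 * x / B1\<^sup>2)"
    using cd(1) B1 by (intro mult_left_mono) auto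
  also have "\<dots> = 4 * B1 ^ 3 - 4 * B1 * x"
    using B1 by (simp add: field_simps power2_eq_square power3_eq_cube)
  finally have "x * (4 * B1 + \<bar>2 * B1\<^sup>2 - 4 * B2\<bar>) \<le> 4 * B1 ^ 3"
    by (simp add: algebra_simps)
  then show "norm A2 ^ 2 * (4 * B1 + \<bar>2 * B1\<^sup>2 - 4 * B2\<bar>) \<le> 4 * B1 ^ 3"
    by (simp only: x_def)
  have "4 * norm A3 \<le> 6 * x + B1 * norm (c2 - d2)"
    using arg_cong[OF diff, of norm] norm_triangle_ineq[of "6 * A2\<^sup>2" "of_real B1 * (c2 - d2)"] B1
    by (simp add: x_def norm_mult norm_power)
  also have "\<dots> \<le> 6 * x + B1 * (4 - 4 * x / B1\<^sup>2)"
    using cd(2) B1 by (simp add: mult_left_mono)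
  also have "\<dots> = 6 * x + 4 * B1 - 4 * x / B1"
    using B1 by (simp add: field_simps power2_eq_square)
  finally show "4 * norm A3 \<le> 6 * norm A2 ^ 2 + 4 * B1 - 4 * norm A2 ^ 2 / B1"
    by (simp only: x_def)
qed

lemma coeff_bounds_of_estimates:
  fixes B1 B2 x y :: real
  assumes B1: "B1 > 0" and x: "x \<ge> 0"
    and a2: "x * (4 * B1 + \<bar>2 * B1\<^sup>2 - 4 * B2\<bar>) \<le> 4 * B1 ^ 3"
    and a3: "4 * y \<le> 6 * x + 4 * B1 - 4 * x / B1"
  shows "sqrt x / 2 \<le> B1 * sqrt B1 / sqrt (4 * B1 + \<bar>2 * B1\<^sup>2 - 4 * B2\<bar>)"
    and "y / 6 \<le> (if B1 \<ge> 2/3 then (1 - 2 / (3 * B1)) * B1 ^ 3 / (4 * B1 + \<bar>2 * B1\<^sup>2 - 4 * B2\<bar>) + B1 / 6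
                  else B1 / 6)"
proof -
  define K where "K = 4 * B1 + \<bar>2 * B1\<^sup>2 - 4 * B2\<bar>"
  have K: "K > 0" using B1 by (simp add: K_def add_pos_nonneg)
  have xK: "x / 4 \<le> B1 ^ 3 / K" using a2 K by (simp add: K_def field_simps)
  have "sqrt x / 2 = sqrt (x / 4)" by (simp add: real_sqrt_divide)
  also have "\<dots> \<le> sqrt (B1 ^ 3 / K)" using xK by simp
  also have "\<dots> = B1 * sqrt B1 / sqrt K"
    using B1 by (simp add: real_sqrt_divide real_sqrt_mult power3_eq_cube)
  finally show "sqrt x / 2 \<le> B1 * sqrt B1 / sqrt (4 * B1 + \<bar>2 * B1\<^sup>2 - 4 * B2\<bar>)"
    by (simp add: K_def)
  have y: "y / 6 \<le> B1 / 6 + (1 - 2 / (3 * B1)) * (x / 4)"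
    using a3 B1 by (simp add: field_simps)
  show "y / 6 \<le> (if B1 \<ge> 2/3 then (1 - 2 / (3 * B1)) * B1 ^ 3 / (4 * B1 + \<bar>2 * B1\<^sup>2 - 4 * B2\<bar>) + B1 / 6
                  else B1 / 6)"
  proof (cases "B1 \<ge> 2/3")
    case True
    then have "(1 - 2 / (3 * B1)) * (x / 4) \<le> (1 - 2 / (3 * B1)) * (B1 ^ 3 / K)"
      using B1 xK by (intro mult_left_mono) (auto simp: field_simps)
    with y have "y / 6 \<le> (1 - 2 / (3 * B1)) * (B1 ^ 3 / K) + B1 / 6"
      by linarith
    then have "y / 6 \<le> (1 - 2 / (3 * B1)) * B1 ^ 3 / K + B1 / 6"
      by (simp only: times_divide_eq_right)
    with True show ?thesis by (simp only: K_def if_True)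
  next
    case False
    then have "(1 - 2 / (3 * B1)) * (x / 4) \<le> 0"
      using B1 x by (intro mult_nonpos_nonneg) (auto simp: field_simps)
    with False y show ?thesis by (simp only: if_not_P if_False)
  qed
qed

lemma admissible_phi_coeffs:
  assumes "admissible_phi \<phi>"
  shows "Re (taylor_coeff \<phi> 1) > 0"
    and "deriv \<phi> 0 = of_real (Re (taylor_coeff \<phi> 1))"
    and "deriv (deriv \<phi>) 0 = of_real (2 * Re (taylor_coeff \<phi> 2))"
proof -
  have "deriv \<phi> 0 \<in> \<real>" "deriv (deriv \<phi>) 0 / 2 \<in> \<real>" "Re (deriv \<phi> 0) > 0"
    using assms unfolding admissible_phi_def by (metis taylor_coeff_1_2_3(2))+
  then show "Re (taylor_coeff \<phi> 1) > 0"
    and "deriv \<phi> 0 = of_real (Re (taylor_coeff \<phi> 1))"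
    and "deriv (deriv \<phi>) 0 = of_real (2 * Re (taylor_coeff \<phi> 2))"
    unfolding taylor_coeff_1_2_3 by (auto elim!: Reals_cases)
qed

theorem corollary2p2:
  fixes \<phi> f :: "complex \<Rightarrow> complex" and B1 B2 :: real
  assumes "admissible_phi \<phi>"
    and "B1 = Re (taylor_coeff \<phi> 1)" and "B2 = Re (taylor_coeff \<phi> 2)"
    and "f \<in> K_sigma \<phi>"
  shows "norm (taylor_coeff f 2) \<le> B1 * sqrt B1 / sqrt (4 * B1 + \<bar>2 * B1\<^sup>2 - 4 * B2\<bar>) \<and>
         norm (taylor_coeff f 3) \<le>
           (if B1 \<ge> 2/3 then (1 - 2 / (3 * B1)) * B1 ^ 3 / (4 * B1 + \<bar>2 * B1\<^sup>2 - 4 * B2\<bar>) + B1 / 6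
            else B1 / 6)"
proof -
  obtain g where bi: "bi_univalent f g"
    and sf: "subordinate (\<lambda>z. 1 + z * deriv (deriv f) z / deriv f z) \<phi>"
    and sg: "subordinate (\<lambda>w. 1 + w * deriv (deriv g) w / deriv g w) \<phi>"
    using assms(4) by (auto simp: K_sigma_def)
  obtain u where u: "schwarz_function u"
    and fu: "\<And>z. z \<in> ball 0 1 \<Longrightarrow> 1 + z * deriv (deriv f) z / deriv f z = \<phi> (u z)"
    using subordinate_schwarz_function[OF sf] by blast
  obtain v where v: "schwarz_function v"
    and gv: "\<And>z. z \<in> ball 0 1 \<Longrightarrow> 1 + z * deriv (deriv g) z / deriv g z = \<phi> (v z)"
    using subordinate_schwarz_function[OF sg] by blast
  have holp: "\<phi> holomorphic_on ball 0 1" and p0: "\<phi> 0 = 1"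
    using assms(1) by (auto simp: admissible_phi_def unit_disc_def)
  note B = admissible_phi_coeffs[OF assms(1), folded assms(2,3)]
  have holf: "f holomorphic_on ball 0 1" and f0: "f 0 = 0" and f1: "deriv f 0 = 1"
    and holg: "g holomorphic_on ball 0 1" and inv: "\<And>z. z \<in> ball 0 1 \<Longrightarrow> f z \<in> ball 0 1 \<Longrightarrow> g (f z) = z"
    using bi by (auto simp: bi_univalent_def unit_disc_def)
  note G = inverse_deriv_coeffs[OF open_ball _ open_ball _ holf holg f0 f1 inv, simplified]
  note est = bi_subordination_coeff_estimates[OF B(1) G(2,3)
      convex_subordination_coeffs[OF holf f1 holp p0 u fu, unfolded B(2,3)]
      convex_subordination_coeffs[OF holg G(1) holp p0 v gv, unfolded B(2,3)]
      schwarz_function_deriv2_bound[OF u] schwarz_function_deriv2_bound[OF v]]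
  show ?thesis
    using coeff_bounds_of_estimates[OF B(1) _ est] by (simp add: taylor_coeff_1_2_3 norm_divide)
qed

end
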